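(* Let $X\in\{0,1\}$ be binary and let $Y_0$ be a real random variable such that: for each $x'\in\{0,1\}$, the conditional cdf of $Y_0$ given $X=x'$ is strictly increasing and continuous on its support; for each $x'\in\{0,1\}$ the support of $Y_0$ given $X=x'$ equals the support of $Y_0$, which is $[\underline{y}_0,\overline{y}_0]$ with $-\infty\le\underline{y}_0<\overline{y}_0\le\infty$; and $\Pr(X=x')>0$ for $x'\in\{0,1\}$. Let $\mathcal{T}=[a,b]\subseteq[\underline{y}_0,\overline{y}_0]$. If $Y_0$ is $\mathcal{T}$-independent of $X$, then \[ \Pr(X=1\mid Y_0=y_0)=\Pr(X=1) \] for almost all $y_0\in\mathcal{T}$.
   Context: $Y_0$ is $\mathcal{T}$-independent of $X$ if $F_{Y_0\mid X}(\tau\mid 0)=F_{Y_0\mid X}(\tau\mid 1)$ for all $\tau\in\mathcal{T}$, where $F_{Y_0\mid X}(\cdot\mid x')$ is the conditional cdf of $Y_0$ given $X=x'$. *)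

theory Defs
  imports "HOL-Probability.Probability"
begin

definition cond_cdf :: "'a measure \<Rightarrow> ('a \<Rightarrow> real) \<Rightarrow> ('a \<Rightarrow> real) \<Rightarrow> real \<Rightarrow> real \<Rightarrow> real" where
  "cond_cdf M Y0 X x' \<tau> =
     measure M {\<omega> \<in> space M. Y0 \<omega> \<le> \<tau> \<and> X \<omega> = x'} / measure M {\<omega> \<in> space M. X \<omega> = x'}"

text \<open>Support of the distribution of Y0 (smallest closed set of full probability).\<close>
definition support :: "'a measure \<Rightarrow> ('a \<Rightarrow> real) \<Rightarrow> real set" where
  "support M Y0 = {y. \<forall>e>0. measure M {\<omega> \<in> space M. Y0 \<omega> \<in> ball y e} > 0}"

definition cond_support :: "'a measure \<Rightarrow> ('a \<Rightarrow> real) \<Rightarrow> ('a \<Rightarrow> real) \<Rightarrow> real \<Rightarrow> real set" where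
  "cond_support M Y0 X x' =
     {y. \<forall>e>0. measure M {\<omega> \<in> space M. Y0 \<omega> \<in> ball y e \<and> X \<omega> = x'} > 0}"

definition T_independent :: "'a measure \<Rightarrow> ('a \<Rightarrow> real) \<Rightarrow> ('a \<Rightarrow> real) \<Rightarrow> real set \<Rightarrow> bool" where
  "T_independent M Y0 X T \<longleftrightarrow> (\<forall>\<tau>\<in>T. cond_cdf M Y0 X 0 \<tau> = cond_cdf M Y0 X 1 \<tau>)"

text \<open>g is a version of y \<mapsto> Pr(A | Y = y): a Borel function, integrable w.r.t. the law of Y,
  with P(A \<inter> {Y \<in> B}) = \<integral>_B g d(law of Y) for every Borel B.\<close>
definition is_cond_prob_given :: "'a measure \<Rightarrow> ('a \<Rightarrow> real) \<Rightarrow> 'a set \<Rightarrow> (real \<Rightarrow> real) \<Rightarrow> bool" where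
  "is_cond_prob_given M Y A g \<longleftrightarrow>
     g \<in> borel_measurable borel \<and> integrable (distr M borel Y) g \<and>
     (\<forall>B\<in>sets borel. measure M (A \<inter> {\<omega> \<in> space M. Y \<omega> \<in> B}) =
        (\<integral>y. indicator B y * g y \<partial>(distr M borel Y)))"

end

theory Submission
  imports Defs
begin

(* T-independence says that P(Y0 \<le> t, X = 1) = P(X = 1) P(Y0 \<le> t) for t \<in> [a, b].
   The same identity holds for the event Y0 < a: if a lies above the lower end of the support,
   left-continuity of the conditional cdfs rules out an atom at a; otherwise Y0 < a is a null
   event because the support carries all the mass. Taking differences gives the identity for
   the half-lines intersected with [a, b], hence, by uniqueness of measures, for every Borel
   set C \<subseteq> [a, b]: P(X = 1, Y0 \<in> C) = P(X = 1) P(Y0 \<in> C). Thus g and the constant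
   P(X = 1) are densities of the same measure on [a, b] and agree almost everywhere there. *)

context finite_measure
begin

lemma AE_in_support:
  fixes Y :: "'a \<Rightarrow> real"
  assumes [measurable]: "Y \<in> borel_measurable M"
  shows "AE \<omega> in M. Y \<omega> \<in> support M Y"
proof -
  define \<B> where "\<B> = {B. open B \<and> Y -` B \<inter> space M \<in> null_sets M}"
  obtain \<B>' where "\<B>' \<subseteq> \<B>" "countable \<B>'" "\<Union>\<B>' = \<Union>\<B>"
    using Lindelof[of \<B>] unfolding \<B>_def by auto
  have "- support M Y \<subseteq> \<Union>\<B>"
  proof
    fix y assume "y \<in> - support M Y"
    then obtain e where "e > 0" and "\<not> measure M {\<omega>\<in>space M. Y \<omega> \<in> ball y e} > 0"
      unfolding support_def by auto
    then have "measure M (Y -` ball y e \<inter> space M) = 0"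
      using measure_nonneg[of M] by (simp add: not_less order_antisym vimage_def Int_def conj_commute)
    moreover have "Y -` ball y e \<inter> space M \<in> sets M"
      by (rule measurable_sets[OF assms]) simp
    ultimately have "Y -` ball y e \<inter> space M \<in> null_sets M"
      by (intro null_setsI) (simp_all add: emeasure_eq_measure)
    then have "ball y e \<in> \<B>"
      unfolding \<B>_def by simp
    moreover have "y \<in> ball y e"
      using \<open>e > 0\<close> by simp
    ultimately show "y \<in> \<Union>\<B>" by blast
  qed
  have "(\<Union>B\<in>\<B>'. (Y -` B \<inter> space M)) \<in> null_sets M"
    using \<open>\<B>' \<subseteq> \<B>\<close> \<open>countable \<B>'\<close> by (intro null_sets_UN') (auto simp: \<B>_def)
  moreover have "{\<omega>\<in>space M. Y \<omega> \<notin> support M Y} \<subseteq> (\<Union>B\<in>\<B>'. (Y -` B \<inter> space M))"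
    using \<open>- support M Y \<subseteq> \<Union>\<B>\<close> \<open>\<Union>\<B>' = \<Union>\<B>\<close> by blast
  ultimately show ?thesis
    by (rule AE_I')
qed

lemma measure_less_eq_measure_le_if_tendsto_at_left:
  fixes Y :: "'a \<Rightarrow> real"
  assumes [measurable]: "Y \<in> borel_measurable M" "Measurable.pred M P"
    and lim: "((\<lambda>t. measure M {\<omega>\<in>space M. Y \<omega> \<le> t \<and> P \<omega>})
               \<longlongrightarrow> measure M {\<omega>\<in>space M. Y \<omega> \<le> a \<and> P \<omega>}) (at_left a)"
  shows "measure M {\<omega>\<in>space M. Y \<omega> < a \<and> P \<omega>} = measure M {\<omega>\<in>space M. Y \<omega> \<le> a \<and> P \<omega>}"
proof (rule antisym)
  have "\<forall>\<^sub>F t in at_left a.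
      measure M {\<omega>\<in>space M. Y \<omega> \<le> t \<and> P \<omega>} \<le> measure M {\<omega>\<in>space M. Y \<omega> < a \<and> P \<omega>}"
    by (rule eventually_at_leftI[of "a - 1"]) (auto intro!: finite_measure_mono)
  then show "measure M {\<omega>\<in>space M. Y \<omega> \<le> a \<and> P \<omega>} \<le> measure M {\<omega>\<in>space M. Y \<omega> < a \<and> P \<omega>}"
    using lim trivial_limit_at_left_real by (intro tendsto_upperbound)
qed (auto intro!: finite_measure_mono)

lemma measure_vimage_eq_if_greaterThan_eq:
  fixes Y :: "'a \<Rightarrow> real"
  assumes [measurable]: "Y \<in> borel_measurable M" "A \<in> sets M" "B \<in> sets M" and "c \<ge> 0"
    and greaterThan: "\<And>t. measure M {\<omega>\<in>A. Y \<omega> \<in> {t<..}} = c * measure M {\<omega>\<in>B. Y \<omega> \<in> {t<..}}"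
    and "C \<in> sets borel"
  shows "measure M {\<omega>\<in>A. Y \<omega> \<in> C} = c * measure M {\<omega>\<in>B. Y \<omega> \<in> C}"
proof -
  have law: "emeasure (distr (density M (indicator S)) borel Y) D = measure M {\<omega>\<in>S. Y \<omega> \<in> D}"
    if "S \<in> sets M" "D \<in> sets borel" for S D
  proof -
    have "emeasure (distr (density M (indicator S)) borel Y) D
        = emeasure M (S \<inter> (Y -` D \<inter> space M))"
      using that by (simp add: emeasure_distr emeasure_restricted)
    also have "S \<inter> (Y -` D \<inter> space M) = {\<omega>\<in>S. Y \<omega> \<in> D}"
      using sets.sets_into_space[OF \<open>S \<in> sets M\<close>] by auto
    finally show ?thesis
      by (simp add: emeasure_eq_measure)
  qed
  have "distr (density M (indicator A)) borel Y
      = scale_measure (ennreal c) (distr (density M (indicator B)) borel Y)"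
  proof (rule measure_eqI_lessThan)
    fix t :: real
    show "emeasure (distr (density M (indicator A)) borel Y) {t<..} < \<infinity>"
      using law[of A "{t<..}"] by simp
    show "emeasure (distr (density M (indicator A)) borel Y) {t<..}
        = emeasure (scale_measure (ennreal c) (distr (density M (indicator B)) borel Y)) {t<..}"
      using law[of A "{t<..}"] law[of B "{t<..}"] greaterThan[of t] \<open>c \<ge> 0\<close>
      by (simp add: ennreal_mult)
  qed simp_all
  then show ?thesis
    using law[of A C] law[of B C] \<open>c \<ge> 0\<close> \<open>C \<in> sets borel\<close> by (simp add: ennreal_mult[symmetric])
qed

lemma AE_cond_prob_eq_const:
  fixes Y :: "'a \<Rightarrow> real"
  assumes [measurable]: "Y \<in> borel_measurable M" "I \<in> sets borel"
    and g: "is_cond_prob_given M Y A g"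
    and eq: "\<And>C. C \<in> sets borel \<Longrightarrow>
      measure M (A \<inter> {\<omega>\<in>space M. Y \<omega> \<in> C \<inter> I}) = c * measure M {\<omega>\<in>space M. Y \<omega> \<in> C \<inter> I}"
  shows "AE y in distr M borel Y. y \<in> I \<longrightarrow> g y = c"
proof -
  let ?N = "distr M borel Y"
  interpret N: finite_measure ?N
    by (simp add: finite_measure_distr)
  have [measurable]: "g \<in> borel_measurable borel" and "integrable ?N g"
    using g by (simp_all add: is_cond_prob_given_def)
  have "AE y in ?N. indicator I y * g y = indicator I y * c"
  proof (rule density_unique_real)
    show "integrable ?N (\<lambda>y. indicator I y * g y)"
      using integrable_real_mult_indicator[OF _ \<open>integrable ?N g\<close>, of I] by (simp add: mult.commute)
    show "integrable ?N (\<lambda>y. indicator I y * c)"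
      by (simp add: integrable_real_indicator N.emeasure_eq_measure)
    fix C assume "C \<in> sets ?N"
    then have [measurable]: "C \<in> sets borel"
      by simp
    have "(\<integral>y\<in>C. indicator I y * g y \<partial>?N) = (\<integral>y. indicator (C \<inter> I) y * g y \<partial>?N)"
      by (simp add: set_lebesgue_integral_def indicator_inter_arith mult.assoc)
    also have "\<dots> = measure M (A \<inter> {\<omega>\<in>space M. Y \<omega> \<in> C \<inter> I})"
      using g by (simp only: is_cond_prob_given_def) (metis sets.Int \<open>C \<in> sets borel\<close> \<open>I \<in> sets borel\<close>)
    also have "\<dots> = c * measure ?N (C \<inter> I)"
      using eq[of C] by (simp add: measure_distr vimage_def Int_def conj_commute)
    also have "\<dots> = (\<integral>y\<in>C. indicator I y * c \<partial>?N)"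
      unfolding set_lebesgue_integral_def by (simp add: mult.assoc[symmetric] mult.commute[of c] flip: indicator_inter_arith)
    finally show "(\<integral>y\<in>C. indicator I y * g y \<partial>?N) = (\<integral>y\<in>C. indicator I y * c \<partial>?N)" .
  qed
  then show ?thesis
    by eventually_elim (simp add: indicator_def)
qed

end

locale binary_covariate = prob_space M for M :: "'a measure" +
  fixes X Y :: "'a \<Rightarrow> real"
  assumes measurable_X [measurable]: "X \<in> borel_measurable M"
    and measurable_Y [measurable]: "Y \<in> borel_measurable M"
    and X_binary: "\<And>\<omega>. \<omega> \<in> space M \<Longrightarrow> X \<omega> = 0 \<or> X \<omega> = 1"
    and prob_X_pos: "\<And>x. x \<in> {0, 1} \<Longrightarrow> prob {\<omega>\<in>space M. X \<omega> = x} > 0"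
begin

abbreviation prob_X1 :: real where
  "prob_X1 \<equiv> prob {\<omega>\<in>space M. X \<omega> = 1}"

lemma prob_split_X:
  assumes [measurable]: "Measurable.pred M P"
  shows "prob {\<omega>\<in>space M. P \<omega>}
    = prob {\<omega>\<in>space M. P \<omega> \<and> X \<omega> = 0} + prob {\<omega>\<in>space M. P \<omega> \<and> X \<omega> = 1}"
proof -
  have "{\<omega>\<in>space M. P \<omega>}
      = {\<omega>\<in>space M. P \<omega> \<and> X \<omega> = 0} \<union> {\<omega>\<in>space M. P \<omega> \<and> X \<omega> = 1}"
    using X_binary by auto
  then show ?thesis
    by (simp add: finite_measure_Union disjoint_iff)
qed

lemma prob_X1_eq_if_conditionals_eq:
  assumes [measurable]: "Measurable.pred M P"
    and "prob {\<omega>\<in>space M. P \<omega> \<and> X \<omega> = 0} / prob {\<omega>\<in>space M. X \<omega> = 0}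
       = prob {\<omega>\<in>space M. P \<omega> \<and> X \<omega> = 1} / prob_X1"
  shows "prob {\<omega>\<in>space M. P \<omega> \<and> X \<omega> = 1} = prob_X1 * prob {\<omega>\<in>space M. P \<omega>}"
proof -
  let ?q = "prob {\<omega>\<in>space M. X \<omega> = 0}"
  let ?F = "\<lambda>x. prob {\<omega>\<in>space M. P \<omega> \<and> X \<omega> = x}"
  have "?q + prob_X1 = 1"
    using prob_split_X[of "\<lambda>_. True"] by (simp add: prob_space)
  have "prob_X1 * ?F 0 = ?q * ?F 1"
    using assms(2) prob_X_pos[of 0] prob_X_pos[of 1] by (simp add: field_simps)
  have "prob_X1 * prob {\<omega>\<in>space M. P \<omega>} = prob_X1 * ?F 0 + prob_X1 * ?F 1"
    by (simp add: prob_split_X[of P] distrib_left)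
  also have "\<dots> = (?q + prob_X1) * ?F 1"
    using \<open>prob_X1 * ?F 0 = ?q * ?F 1\<close> by (simp add: distrib_right)
  finally show ?thesis
    using \<open>?q + prob_X1 = 1\<close> by simp
qed

lemma prob_le_X1_eq_if_cond_cdf_eq:
  assumes "cond_cdf M Y X 0 t = cond_cdf M Y X 1 t"
  shows "prob {\<omega>\<in>space M. Y \<omega> \<le> t \<and> X \<omega> = 1} = prob_X1 * prob {\<omega>\<in>space M. Y \<omega> \<le> t}"
  using assms by (intro prob_X1_eq_if_conditionals_eq) (simp_all add: cond_cdf_def)

lemma prob_less_eq_prob_le_if_cond_cdf_continuous:
  assumes "continuous_on {r..a} (cond_cdf M Y X x)" and "r < a" and "x \<in> {0, 1}"
  shows "prob {\<omega>\<in>space M. Y \<omega> < a \<and> X \<omega> = x} = prob {\<omega>\<in>space M. Y \<omega> \<le> a \<and> X \<omega> = x}"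
proof (rule measure_less_eq_measure_le_if_tendsto_at_left)
  have "(cond_cdf M Y X x \<longlongrightarrow> cond_cdf M Y X x a) (at_left a)"
    using assms(1,2) by (rule continuous_on_Icc_at_leftD)
  then have "((\<lambda>t. cond_cdf M Y X x t * prob {\<omega>\<in>space M. X \<omega> = x})
      \<longlongrightarrow> cond_cdf M Y X x a * prob {\<omega>\<in>space M. X \<omega> = x}) (at_left a)"
    by (rule tendsto_mult_right)
  then show "((\<lambda>t. prob {\<omega>\<in>space M. Y \<omega> \<le> t \<and> X \<omega> = x})
      \<longlongrightarrow> prob {\<omega>\<in>space M. Y \<omega> \<le> a \<and> X \<omega> = x}) (at_left a)"
    using prob_X_pos[OF assms(3)] by (simp add: cond_cdf_def)
qed simp_all

lemma prob_less_X1_eq_if_cond_cdf_eq: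
  fixes ylo yhi :: ereal
  assumes support: "support M Y = {y. ylo \<le> ereal y \<and> ereal y \<le> yhi}" and "a \<in> support M Y"
    and cont: "\<And>x. x \<in> {0, 1} \<Longrightarrow> continuous_on (support M Y) (cond_cdf M Y X x)"
    and "cond_cdf M Y X 0 a = cond_cdf M Y X 1 a"
  shows "prob {\<omega>\<in>space M. Y \<omega> < a \<and> X \<omega> = 1} = prob_X1 * prob {\<omega>\<in>space M. Y \<omega> < a}"
proof (cases "ylo < ereal a")
  case True
  then obtain r where "ylo < ereal r" "r < a"
    using ereal_dense2 by fastforce
  have "{r..a} \<subseteq> support M Y"
  proof
    fix t assume "t \<in> {r..a}"
    have "ereal t \<le> ereal a" "ereal a \<le> yhi"
      using \<open>t \<in> {r..a}\<close> \<open>a \<in> support M Y\<close> support by simp_all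
    then have "ereal t \<le> yhi"
      by (rule order.trans)
    moreover have "ylo \<le> ereal t"
      using \<open>ylo < ereal r\<close> \<open>t \<in> {r..a}\<close> by (simp add: order.strict_trans2 less_imp_le)
    ultimately show "t \<in> support M Y"
      using support by blast
  qed
  have "prob {\<omega>\<in>space M. Y \<omega> < a \<and> X \<omega> = x} = prob {\<omega>\<in>space M. Y \<omega> \<le> a \<and> X \<omega> = x}"
    if "x \<in> {0, 1}" for x
    using continuous_on_subset[OF cont[OF that] \<open>{r..a} \<subseteq> support M Y\<close>] \<open>r < a\<close> that
    by (rule prob_less_eq_prob_le_if_cond_cdf_continuous)
  then show ?thesis
    using assms(4) by (intro prob_X1_eq_if_conditionals_eq) (simp_all add: cond_cdf_def)
next
  case False
  moreover have "ylo \<le> ereal a"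
    using support \<open>a \<in> support M Y\<close> by simp
  ultimately have "ylo = ereal a"
    by simp
  have "AE \<omega> in M. \<not> Y \<omega> < a"
    using AE_in_support[OF measurable_Y]
    by eventually_elim (simp add: support not_less \<open>ylo = ereal a\<close>)
  moreover from this have "AE \<omega> in M. \<not> (Y \<omega> < a \<and> X \<omega> = 1)"
    by eventually_elim simp
  ultimately show ?thesis
    by (simp add: measure_def emeasure_eq_0_AE)
qed

lemma prob_X1_Diff_eq:
  assumes [measurable]: "Measurable.pred M P" "Measurable.pred M Q" and "\<And>\<omega>. Q \<omega> \<Longrightarrow> P \<omega>"
    and "prob {\<omega>\<in>space M. P \<omega> \<and> X \<omega> = 1} = prob_X1 * prob {\<omega>\<in>space M. P \<omega>}"
    and "prob {\<omega>\<in>space M. Q \<omega> \<and> X \<omega> = 1} = prob_X1 * prob {\<omega>\<in>space M. Q \<omega>}"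
  shows "prob {\<omega>\<in>space M. (P \<omega> \<and> \<not> Q \<omega>) \<and> X \<omega> = 1}
    = prob_X1 * prob {\<omega>\<in>space M. P \<omega> \<and> \<not> Q \<omega>}"
proof -
  have "{\<omega>\<in>space M. (P \<omega> \<and> \<not> Q \<omega>) \<and> X \<omega> = 1}
      = {\<omega>\<in>space M. P \<omega> \<and> X \<omega> = 1} - {\<omega>\<in>space M. Q \<omega> \<and> X \<omega> = 1}"
    "{\<omega>\<in>space M. P \<omega> \<and> \<not> Q \<omega>} = {\<omega>\<in>space M. P \<omega>} - {\<omega>\<in>space M. Q \<omega>}"
    by auto
  moreover have "prob ({\<omega>\<in>space M. P \<omega> \<and> X \<omega> = 1} - {\<omega>\<in>space M. Q \<omega> \<and> X \<omega> = 1})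
      = prob {\<omega>\<in>space M. P \<omega> \<and> X \<omega> = 1} - prob {\<omega>\<in>space M. Q \<omega> \<and> X \<omega> = 1}"
    "prob ({\<omega>\<in>space M. P \<omega>} - {\<omega>\<in>space M. Q \<omega>})
      = prob {\<omega>\<in>space M. P \<omega>} - prob {\<omega>\<in>space M. Q \<omega>}"
    using assms(3) by (auto intro!: finite_measure_Diff)
  ultimately show ?thesis
    using assms(4,5) by (simp add: right_diff_distrib)
qed

lemma prob_greaterThan_Icc_X1_eq:
  assumes "a \<le> b" and "T_independent M Y X {a..b}"
    and "prob {\<omega>\<in>space M. Y \<omega> < a \<and> X \<omega> = 1} = prob_X1 * prob {\<omega>\<in>space M. Y \<omega> < a}"
  shows "prob {\<omega>\<in>space M. Y \<omega> \<in> {t<..} \<inter> {a..b} \<and> X \<omega> = 1}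
    = prob_X1 * prob {\<omega>\<in>space M. Y \<omega> \<in> {t<..} \<inter> {a..b}}"
proof -
  have cdf: "prob {\<omega>\<in>space M. Y \<omega> \<le> s \<and> X \<omega> = 1} = prob_X1 * prob {\<omega>\<in>space M. Y \<omega> \<le> s}"
    if "s \<in> {a..b}" for s
    using assms(2) that unfolding T_independent_def by (intro prob_le_X1_eq_if_cond_cdf_eq) auto
  consider "b \<le> t" | "a \<le> t" "t < b" | "t < a"
    by linarith
  then show ?thesis
  proof cases
    case 1
    then have "Y \<omega> \<in> {t<..} \<inter> {a..b} \<longleftrightarrow> False" for \<omega>
      by auto
    then show ?thesis
      by (simp only:) simp
  next
    case 2
    then have "Y \<omega> \<in> {t<..} \<inter> {a..b} \<longleftrightarrow> Y \<omega> \<le> b \<and> \<not> Y \<omega> \<le> t" for \<omega>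
      by auto
    moreover have "prob {\<omega>\<in>space M. (Y \<omega> \<le> b \<and> \<not> Y \<omega> \<le> t) \<and> X \<omega> = 1}
        = prob_X1 * prob {\<omega>\<in>space M. Y \<omega> \<le> b \<and> \<not> Y \<omega> \<le> t}"
      using 2 cdf[of b] cdf[of t] by (intro prob_X1_Diff_eq) auto
    ultimately show ?thesis
      by (simp only:)
  next
    case 3
    then have "Y \<omega> \<in> {t<..} \<inter> {a..b} \<longleftrightarrow> Y \<omega> \<le> b \<and> \<not> Y \<omega> < a" for \<omega>
      by auto
    moreover have "prob {\<omega>\<in>space M. (Y \<omega> \<le> b \<and> \<not> Y \<omega> < a) \<and> X \<omega> = 1}
        = prob_X1 * prob {\<omega>\<in>space M. Y \<omega> \<le> b \<and> \<not> Y \<omega> < a}"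
      using \<open>a \<le> b\<close> cdf[of b] assms(3) by (intro prob_X1_Diff_eq) auto
    ultimately show ?thesis
      by (simp only:)
  qed
qed

lemma prob_X1_vimage_Icc_eq:
  assumes "a \<le> b" and "T_independent M Y X {a..b}"
    and "prob {\<omega>\<in>space M. Y \<omega> < a \<and> X \<omega> = 1} = prob_X1 * prob {\<omega>\<in>space M. Y \<omega> < a}"
    and "C \<in> sets borel"
  shows "prob ({\<omega>\<in>space M. X \<omega> = 1} \<inter> {\<omega>\<in>space M. Y \<omega> \<in> C \<inter> {a..b}})
    = prob_X1 * prob {\<omega>\<in>space M. Y \<omega> \<in> C \<inter> {a..b}}"
proof -
  let ?A = "{\<omega>\<in>space M. Y \<omega> \<in> {a..b} \<and> X \<omega> = 1}"
  let ?B = "{\<omega>\<in>space M. Y \<omega> \<in> {a..b}}"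
  have sets: "?A \<in> sets M" "?B \<in> sets M"
    by measurable
  have "prob {\<omega>\<in>?A. Y \<omega> \<in> {t<..}} = prob_X1 * prob {\<omega>\<in>?B. Y \<omega> \<in> {t<..}}" for t
  proof -
    have "{\<omega>\<in>?A. Y \<omega> \<in> {t<..}} = {\<omega>\<in>space M. Y \<omega> \<in> {t<..} \<inter> {a..b} \<and> X \<omega> = 1}"
      "{\<omega>\<in>?B. Y \<omega> \<in> {t<..}} = {\<omega>\<in>space M. Y \<omega> \<in> {t<..} \<inter> {a..b}}"
      by auto
    then show ?thesis
      using prob_greaterThan_Icc_X1_eq[OF assms(1-3), of t] by (simp only:)
  qed
  then have "prob {\<omega>\<in>?A. Y \<omega> \<in> C} = prob_X1 * prob {\<omega>\<in>?B. Y \<omega> \<in> C}"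
    by (rule measure_vimage_eq_if_greaterThan_eq[OF measurable_Y sets measure_nonneg _ assms(4)])
  moreover have "{\<omega>\<in>?A. Y \<omega> \<in> C} = {\<omega>\<in>space M. X \<omega> = 1} \<inter> {\<omega>\<in>space M. Y \<omega> \<in> C \<inter> {a..b}}"
    "{\<omega>\<in>?B. Y \<omega> \<in> C} = {\<omega>\<in>space M. Y \<omega> \<in> C \<inter> {a..b}}"
    by blast+
  ultimately show ?thesis
    by (simp only:)
qed

end

theorem corollary4:
  fixes M :: "'a measure" and X Y0 :: "'a \<Rightarrow> real"
    and ylo yhi :: ereal and a b :: real and g :: "real \<Rightarrow> real"
  assumes "prob_space M"
    and "X \<in> borel_measurable M" and "Y0 \<in> borel_measurable M"
    and "\<forall>\<omega>\<in>space M. X \<omega> \<in> {0, 1}"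
    and "\<forall>x'\<in>{0, 1}. measure M {\<omega> \<in> space M. X \<omega> = x'} > 0"
    and "ylo < yhi"
    and "support M Y0 = {y. ylo \<le> ereal y \<and> ereal y \<le> yhi}"
    and "\<forall>x'\<in>{0, 1}. cond_support M Y0 X x' = support M Y0"
    and "\<forall>x'\<in>{0, 1}. strict_mono_on (support M Y0) (cond_cdf M Y0 X x')"
    and "\<forall>x'\<in>{0, 1}. continuous_on (support M Y0) (cond_cdf M Y0 X x')"
    and "{a..b} \<subseteq> support M Y0"
    and "T_independent M Y0 X {a..b}"
    and "is_cond_prob_given M Y0 {\<omega> \<in> space M. X \<omega> = 1} g"
  shows "AE y in distr M borel Y0. y \<in> {a..b} \<longrightarrow>
           g y = measure M {\<omega> \<in> space M. X \<omega> = 1}"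
proof (cases "a \<le> b")
  case True
  interpret binary_covariate M X Y0
    using assms(2-5) by (intro binary_covariate.intro binary_covariate_axioms.intro assms(1)) auto
  have "prob {\<omega>\<in>space M. Y0 \<omega> < a \<and> X \<omega> = 1} = prob_X1 * prob {\<omega>\<in>space M. Y0 \<omega> < a}"
    using True assms(7,10-12) by (intro prob_less_X1_eq_if_cond_cdf_eq) (auto simp: T_independent_def)
  with True assms(12)
  have "prob ({\<omega>\<in>space M. X \<omega> = 1} \<inter> {\<omega>\<in>space M. Y0 \<omega> \<in> C \<inter> {a..b}})
      = prob_X1 * prob {\<omega>\<in>space M. Y0 \<omega> \<in> C \<inter> {a..b}}" if "C \<in> sets borel" for C
    using that by (rule prob_X1_vimage_Icc_eq)
  then show ?thesis
    by (intro AE_cond_prob_eq_const[OF assms(3) _ assms(13)]) simp_all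
qed simp

end
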